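(* Let $P$ be a positive causal logic program and let $P'$ be its unlabelled version (every rule label replaced by $1$, i.e. the corresponding standard positive logic program). Let $I$ be the least causal model of $P$ and $I'$ the least classical model of $P'$ (viewed as a map from atoms to $\{0,1\}$). Then $I'=I^{cl}$.
   Context: Causal values are down-sets of causal graphs (reflexively–transitively closed directed graphs on labels, ordered by reverse inclusion), with $0=\emptyset$ and $1$ the set of all causal graphs; $*$ is intersection, $+$ union, and $U\cdot U'={\downarrow}\{G\cdot G'\mid G\in U,G'\in U'\}$ where $G\cdot G'$ is the closure of the graph with vertices $V\cup V'$ and edges $E\cup E'\cup(V\times V')$; a label $l$ denotes ${\downarrow}$ of the graph with only edge $(l,l)$. Rules are $t:H\leftarrow B_1,\dots,B_n$ with $t$ a label or $1$; a causal interpretation $I$ (atoms to causal values) is a model of positive $P$ iff $(I(B_1)*\dots*I(B_n))\cdot t\subseteq I(H)$ for each rule; the least model is taken w.r.t. pointwise inclusion. For a causal interpretation $I$, $I^{cl}(p)=0$ if $I(p)=0$ and $I^{cl}(p)=1$ otherwise. *)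

theory Defs
  imports Main
begin

text \<open>Causal graphs over labels of type 'l are represented by their edge relation;
  since a causal graph is reflexively closed, its vertex set is the domain of the relation.\<close>

definition cgraph :: "('l \<times> 'l) set \<Rightarrow> bool" where
  "cgraph G \<longleftrightarrow> (\<forall>(a,b)\<in>G. (a,a) \<in> G \<and> (b,b) \<in> G) \<and> trans G"

definition verts :: "('l \<times> 'l) set \<Rightarrow> 'l set" where
  "verts G = Domain G \<union> Range G"

definition cg_le :: "('l \<times> 'l) set \<Rightarrow> ('l \<times> 'l) set \<Rightarrow> bool" where
  "cg_le G G' \<longleftrightarrow> G' \<subseteq> G"

definition cgraphs :: "('l \<times> 'l) set set" where
  "cgraphs = {G. cgraph G}"

definition dset :: "('l \<times> 'l) set set \<Rightarrow> ('l \<times> 'l) set set" where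
  "dset S = {G. cgraph G \<and> (\<exists>G'\<in>S. cg_le G G')}"

definition is_cvalue :: "('l \<times> 'l) set set \<Rightarrow> bool" where
  "is_cvalue U \<longleftrightarrow> U \<subseteq> cgraphs \<and> (\<forall>G\<in>U. \<forall>G'. cgraph G' \<and> cg_le G' G \<longrightarrow> G' \<in> U)"

definition cv_zero :: "('l \<times> 'l) set set" where "cv_zero = {}"
definition cv_one :: "('l \<times> 'l) set set" where "cv_one = cgraphs"

definition gprod :: "('l \<times> 'l) set \<Rightarrow> ('l \<times> 'l) set \<Rightarrow> ('l \<times> 'l) set" where
  "gprod G G' = (Id_on (verts G \<union> verts G') \<union> G \<union> G' \<union> (verts G \<times> verts G'))\<^sup>+"

definition cprod :: "('l \<times> 'l) set set \<Rightarrow> ('l \<times> 'l) set set \<Rightarrow> ('l \<times> 'l) set set" where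
  "cprod U U' = dset {gprod G G' | G G'. G \<in> U \<and> G' \<in> U'}"

text \<open>Value of a rule label: None stands for 1, Some l for the label l.\<close>
definition label_val :: "'l option \<Rightarrow> ('l \<times> 'l) set set" where
  "label_val t = (case t of None \<Rightarrow> cv_one | Some l \<Rightarrow> dset {{(l,l)}})"

datatype ('a, 'l) crule = CRule (label: "'l option") (head: 'a) (body: "'a list")

type_synonym ('a, 'l) cinterp = "'a \<Rightarrow> ('l \<times> 'l) set set"

text \<open>I(B1) * ... * I(Bn) (empty product = 1).\<close>
definition body_val :: "('a, 'l) cinterp \<Rightarrow> 'a list \<Rightarrow> ('l \<times> 'l) set set" where
  "body_val I bs = cv_one \<inter> (\<Inter>b\<in>set bs. I b)"

definition causal_interp :: "('a, 'l) cinterp \<Rightarrow> bool" where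
  "causal_interp I \<longleftrightarrow> (\<forall>p. is_cvalue (I p))"

definition causal_model :: "('a, 'l) crule set \<Rightarrow> ('a, 'l) cinterp \<Rightarrow> bool" where
  "causal_model P I \<longleftrightarrow> causal_interp I \<and>
     (\<forall>r\<in>P. cprod (body_val I (body r)) (label_val (label r)) \<subseteq> I (head r))"

definition least_causal_model :: "('a, 'l) crule set \<Rightarrow> ('a, 'l) cinterp \<Rightarrow> bool" where
  "least_causal_model P I \<longleftrightarrow> causal_model P I \<and>
     (\<forall>J. causal_model P J \<longrightarrow> (\<forall>p. I p \<subseteq> J p))"

definition unlabel :: "('a, 'l) crule set \<Rightarrow> ('a, 'l) crule set" where
  "unlabel P = (\<lambda>r. CRule None (head r) (body r)) ` P"

definition classical_model :: "('a, 'l) crule set \<Rightarrow> ('a \<Rightarrow> bool) \<Rightarrow> bool" where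
  "classical_model P M \<longleftrightarrow> (\<forall>r\<in>P. (\<forall>b\<in>set (body r). M b) \<longrightarrow> M (head r))"

definition least_classical_model :: "('a, 'l) crule set \<Rightarrow> ('a \<Rightarrow> bool) \<Rightarrow> bool" where
  "least_classical_model P M \<longleftrightarrow> classical_model P M \<and>
     (\<forall>N. classical_model P N \<longrightarrow> (\<forall>p. M p \<longrightarrow> N p))"

definition bool_to_cv :: "('a \<Rightarrow> bool) \<Rightarrow> ('a, 'l) cinterp" where
  "bool_to_cv M p = (if M p then cv_one else cv_zero)"

definition cl :: "('a, 'l) cinterp \<Rightarrow> ('a, 'l) cinterp" where
  "cl I p = (if I p = cv_zero then cv_zero else cv_one)"

end

theory Submission
  imports Defs
begin

(* The full relation UNIV is the bottom causal graph (the order is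
   reverse inclusion), so a causal value is nonzero iff it contains UNIV, and UNIV
   is absorbed by the graph product.  Hence the "support" of a causal model,
   the atoms with nonzero value, is a classical model of the unlabelled program.
   Conversely, a classical model M of the unlabelled program, read as the
   {0,1}-valued interpretation bool_to_cv M, is a causal model of P, because a
   product with a zero factor is zero and everything lies below 1.
   Minimality of the two least models in each other's direction then gives
   I p <> 0 exactly when I' p holds, which is the claim bool_to_cv I' = cl I. *)

lemma classical_model_unlabel:
  "classical_model (unlabel P) M \<longleftrightarrow> classical_model P M"
  unfolding classical_model_def unlabel_def by auto

(* The full relation is a causal graph; it is below every causal graph. *)
lemma cgraph_UNIV: "cgraph (UNIV :: ('l \<times> 'l) set)"
  by (auto simp: cgraph_def trans_def)

lemma cvalue_nonzero_UNIV:
  assumes "is_cvalue U" and "U \<noteq> {}"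
  shows "UNIV \<in> U"
  using assms cgraph_UNIV unfolding is_cvalue_def cg_le_def by blast

lemma gprod_UNIV: "gprod UNIV UNIV = UNIV"
  unfolding gprod_def by auto

lemma cprod_UNIV:
  assumes "UNIV \<in> U" and "UNIV \<in> U'"
  shows "UNIV \<in> cprod U U'"
  using assms cgraph_UNIV gprod_UNIV unfolding cprod_def dset_def cg_le_def by fastforce

lemma cprod_zero_left: "cprod {} U = {}"
  unfolding cprod_def dset_def by auto

lemma label_val_UNIV: "UNIV \<in> label_val t"
  using cgraph_UNIV
  unfolding label_val_def cv_one_def cgraphs_def dset_def cg_le_def
  by (auto split: option.split)

(* The support of a causal model is a classical model of the unlabelled program:
   if all body atoms are nonzero, the rule produces UNIV in the head. *)
lemma support_classical_model:
  assumes "causal_model P I"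
  shows "classical_model (unlabel P) (\<lambda>p. I p \<noteq> {})"
  unfolding classical_model_unlabel unfolding classical_model_def
proof (intro ballI impI)
  fix r assume r: "r \<in> P" and body_nonzero: "\<forall>b\<in>set (body r). I b \<noteq> {}"
  have cv: "\<And>p. is_cvalue (I p)"
    using assms unfolding causal_model_def causal_interp_def by auto
  have "UNIV \<in> body_val I (body r)"
    using body_nonzero cvalue_nonzero_UNIV[OF cv] cgraph_UNIV
    unfolding body_val_def cv_one_def cgraphs_def by auto
  then have "UNIV \<in> cprod (body_val I (body r)) (label_val (label r))"
    using cprod_UNIV label_val_UNIV by blast
  moreover have "cprod (body_val I (body r)) (label_val (label r)) \<subseteq> I (head r)"
    using assms r unfolding causal_model_def by auto
  ultimately show "I (head r) \<noteq> {}" by auto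
qed

lemma causal_interp_bool_to_cv: "causal_interp (bool_to_cv M)"
  unfolding causal_interp_def bool_to_cv_def is_cvalue_def cv_one_def cv_zero_def cgraphs_def
  by auto

(* A classical model of the unlabelled program, read as a {0,1}-valued
   interpretation, is a causal model: a rule with a false body atom has a zero
   body product, and otherwise its head has value 1. *)
lemma classical_model_causal:
  assumes "classical_model (unlabel P) M"
  shows "causal_model P (bool_to_cv M)"
  unfolding causal_model_def
proof (intro conjI causal_interp_bool_to_cv ballI)
  fix r assume r: "r \<in> P"
  show "cprod (body_val (bool_to_cv M) (body r)) (label_val (label r)) \<subseteq> bool_to_cv M (head r)"
  proof (cases "\<forall>b\<in>set (body r). M b")
    case True
    then have "M (head r)"
      using assms r unfolding classical_model_unlabel unfolding classical_model_def by blast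
    then show ?thesis
      unfolding bool_to_cv_def cprod_def dset_def cv_one_def cgraphs_def by auto
  next
    case False
    then have "body_val (bool_to_cv M) (body r) = {}"
      unfolding body_val_def bool_to_cv_def cv_zero_def by auto
    then show ?thesis by (metis cprod_zero_left empty_subsetI)
  qed
qed

theorem theorem5:
  fixes P :: "('a, 'l) crule set" and I :: "('a, 'l) cinterp" and I' :: "'a \<Rightarrow> bool"
  assumes "least_causal_model P I"
    and "least_classical_model (unlabel P) I'"
  shows "(bool_to_cv I' :: ('a, 'l) cinterp) = cl I"
proof
  fix p
  have causal: "causal_model P I" and I_least: "\<And>J. causal_model P J \<Longrightarrow> I p \<subseteq> J p"
    using assms(1) unfolding least_causal_model_def by auto
  have classical: "classical_model (unlabel P) I'"
    and I'_least: "\<And>N. classical_model (unlabel P) N \<Longrightarrow> I' p \<Longrightarrow> N p"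
    using assms(2) unfolding least_classical_model_def by auto
  have "I' p \<Longrightarrow> I p \<noteq> {}"
    using I'_least[OF support_classical_model[OF causal]] .
  moreover have "I p \<subseteq> bool_to_cv I' p"
    using I_least[OF classical_model_causal[OF classical]] .
  then have "I p \<noteq> {} \<Longrightarrow> I' p"
    unfolding bool_to_cv_def cv_zero_def by (auto split: if_splits)
  ultimately show "bool_to_cv I' p = cl I p"
    unfolding bool_to_cv_def cl_def cv_zero_def by auto
qed

end
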